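(* Let $(J,\preccurlyeq)$ be a finite upper semilattice and $F\subseteq K_J$ a subfunctor of the constant functor. Let $A:=\mathrm{supp}(\beta^0F)$ (the set of minimal elements of $\{a\in J\mid F(a)\neq0\}$) and fix a total order $<$ on $A$. Define the global Koszul complex $\mathcal K F$ by \[ (\mathcal K F)_d:=\bigoplus_{S\subseteq A,\ |S|=d+1} K\big(\textstyle\bigvee S,-\big)\qquad (d\geq 0), \] with differential $\partial=\sum_{i=0}^{d+1}(-1)^i\partial_i\colon(\mathcal K F)_{d+1}\to(\mathcal K F)_d$, where $\partial_i$ maps the summand $K(\bigvee S,-)$ indexed by $S=\{s_0<\cdots<s_{d+1}\}$ to the summand $K(\bigvee(S\setminus\{s_i\}),-)$ via the inclusion $K(\bigvee S,-)\subseteq K(\bigvee(S\setminus\{s_i\}),-)$, and with augmentation $\partial\colon(\mathcal K F)_0=\bigoplus_{s\in A}K(s,-)\to F$ given on the summand $K(s,-)$ by the inclusion $K(s,-)\subseteq F$. Then $\cdots\to(\mathcal KF)_1\to(\mathcal KF)_0\to F\to 0$ is a free resolution of $F$ (i.e.\ it is exact, and each $(\mathcal KF)_d$ is a direct sum of functors $K(b,-)$).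
   Context: $K$ is a field and $\mathrm{vect}_K$ the category of finite-dimensional $K$-vector spaces. $K_J\colon J\to\mathrm{vect}_K$ is the constant functor with value $K$ and identity transition maps. For $a\in J$, $K(a,-)\subseteq K_J$ is the subfunctor with $K(a,b)=K$ if $a\preccurlyeq b$ and $0$ otherwise. Subfunctors of $K_J$ correspond to upsets (their supports $\{a\mid F(a)\neq 0\}$), and $\mathrm{supp}(\beta^0F)$, the support of the $0$-th Betti diagram (degrees of generators of a minimal projective cover), equals the set of minimal elements of the support of $F$. An upper semilattice is a poset in which every nonempty subset $S$ has a join $\bigvee S$. *)

theory Defs
  imports Main
begin

text \<open>The poset J is modelled as a finite type of class semilattice_sup; the join of a
nonempty (finite) subset S is Sup_fin S.  A subfunctor F of the constant functor K_J is
given pointwise by subspaces F a of K (viewed as a K-vector space), such that the identity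
transition maps restrict, i.e. F a is contained in F b whenever a is below b.\<close>

definition is_subfunctor_const :: "('j::order \<Rightarrow> 'k::field set) \<Rightarrow> bool" where
  "is_subfunctor_const F \<longleftrightarrow>
     (\<forall>a. 0 \<in> F a \<and> (\<forall>x\<in>F a. \<forall>y\<in>F a. x + y \<in> F a) \<and> (\<forall>c x. x \<in> F a \<longrightarrow> c * x \<in> F a))
     \<and> (\<forall>a b. a \<le> b \<longrightarrow> F a \<subseteq> F b)"

definition supp_fun :: "('j \<Rightarrow> 'k::zero set) \<Rightarrow> 'j set" where
  "supp_fun F = {a. F a \<noteq> {0}}"

definition betti0_supp :: "('j::order \<Rightarrow> 'k::zero set) \<Rightarrow> 'j set" where
  "betti0_supp F = {a \<in> supp_fun F. \<forall>a'\<in>supp_fun F. a' \<le> a \<longrightarrow> a' = a}"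

text \<open>Value at b of the d-th term of the Koszul complex: the direct sum over
S \<subseteq> A with |S| = d+1 of K(\<Squnion>S, b), which is K if \<Squnion>S \<le> b and 0 otherwise.
Elements are represented as coefficient families indexed by the subsets S, vanishing off the
index set of summands that are nonzero at b.\<close>

definition koszul_idx :: "'j::semilattice_sup set \<Rightarrow> nat \<Rightarrow> 'j \<Rightarrow> 'j set set" where
  "koszul_idx A d b = {S. S \<subseteq> A \<and> card S = Suc d \<and> Sup_fin S \<le> b}"

definition koszul_space :: "'j::semilattice_sup set \<Rightarrow> nat \<Rightarrow> 'j \<Rightarrow> ('j set \<Rightarrow> 'k::field) set" where
  "koszul_space A d b = {x. \<forall>S. x S \<noteq> 0 \<longrightarrow> S \<in> koszul_idx A d b}"

text \<open>Sign (-1)^i where s = s_i is the i-th element of S (counting from 0) in the order r.\<close>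

definition koszul_sign :: "('j \<times> 'j) set \<Rightarrow> 'j set \<Rightarrow> 'j \<Rightarrow> 'k::field" where
  "koszul_sign r S s = (-1) ^ card {t \<in> S. (t, s) \<in> r}"

text \<open>Differential (KF)_{d+1} \<rightarrow> (KF)_d at b: the summand indexed by S goes to the summands
indexed by S - {s_i} with sign (-1)^i; component maps are the inclusions (identity on K).\<close>

definition koszul_diff ::
  "'j::semilattice_sup set \<Rightarrow> ('j \<times> 'j) set \<Rightarrow> nat \<Rightarrow> 'j \<Rightarrow> ('j set \<Rightarrow> 'k::field) \<Rightarrow> ('j set \<Rightarrow> 'k)" where
  "koszul_diff A r d b x =
     (\<lambda>T. if T \<in> koszul_idx A d b
          then (\<Sum>s\<in>A - T. koszul_sign r (insert s T) s * x (insert s T))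
          else 0)"

text \<open>Augmentation (KF)_0 \<rightarrow> F at b: inclusion K(s,-) \<subseteq> F on each summand.\<close>

definition koszul_aug :: "'j set \<Rightarrow> ('j set \<Rightarrow> 'k::field) \<Rightarrow> 'k" where
  "koszul_aug A x = (\<Sum>s\<in>A. x {s})"

end

theory Submission
  imports Defs
begin

text \<open>At a fixed b, the summand K(\<Squnion>S, b) is nonzero iff every element of S lies below b,
so the complex evaluated at b is the augmented simplicial chain complex of the full simplex on
A_b = {a \<in> A. a \<le> b}. If A_b is empty, every term vanishes, and so does F b, since every
nonzero F a lies above a minimal element of the support. Otherwise F b = K, and coning off with a
vertex v \<in> A_b is a contracting homotopy: d(v * x) = x - v * dx. Together with dd = 0 this
makes every cycle a boundary.\<close>

lemma strict_linear_order_on_xor: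
  assumes "strict_linear_order_on A r" "s \<in> A" "t \<in> A" "s \<noteq> t"
  shows "((s, t) \<in> r) \<noteq> ((t, s) \<in> r)"
  using assms by (auto simp: strict_linear_order_on_def total_on_def irrefl_def dest: transD)

lemma sum_offdiag_antisym_eq_0:
  fixes f :: "'a \<Rightarrow> 'a \<Rightarrow> 'b::ab_group_add"
  assumes "finite B" "strict_linear_order_on B r"
    and antisym: "\<And>s t. s \<in> B \<Longrightarrow> t \<in> B \<Longrightarrow> s \<noteq> t \<Longrightarrow> f s t = - f t s"
  shows "(\<Sum>s\<in>B. \<Sum>t\<in>B - {s}. f s t) = 0"
proof -
  define k where "k s t = (if (s, t) \<in> r then f s t else 0)" for s t
  \<comment> \<open>Antisymmetry alone only shows that twice the sum vanishes; splitting each pair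
    along r also handles characteristic 2.\<close>
  have "f s t = k s t - k t s" if "s \<in> B" "t \<in> B" "s \<noteq> t" for s t
    using strict_linear_order_on_xor[OF assms(2) that] antisym[OF that] by (auto simp: k_def)
  then have "(\<Sum>t\<in>B - {s}. f s t) = (\<Sum>t\<in>B. k s t - k t s)" if "s \<in> B" for s
    using that by (auto simp: sum.remove[OF assms(1) that] intro!: sum.cong)
  then have "(\<Sum>s\<in>B. \<Sum>t\<in>B - {s}. f s t) = (\<Sum>s\<in>B. \<Sum>t\<in>B. k s t - k t s)"
    by simp
  also have "\<dots> = 0"
    by (simp add: sum_subtractf sum.swap[of "\<lambda>t s. k s t"])
  finally show ?thesis .
qed

lemma koszul_sign_insert:
  assumes "finite S" "s \<notin> S"
  shows "(koszul_sign r (insert s S) t :: 'k::field)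
    = (if (s, t) \<in> r then -1 else 1) * koszul_sign r S t"
proof -
  have "{u \<in> insert s S. (u, t) \<in> r}
      = (if (s, t) \<in> r then insert s else id) {u \<in> S. (u, t) \<in> r}"
    by auto
  then show ?thesis
    using assms by (simp add: koszul_sign_def)
qed

lemma koszul_sign_insert_self:
  assumes "finite S" "s \<notin> S" "irrefl r"
  shows "(koszul_sign r (insert s S) s :: 'k::field) = koszul_sign r S s"
  using koszul_sign_insert[OF assms(1,2), of r s, where 'k='k] assms(3) by (simp add: irrefl_def)

lemma koszul_sign_mult_self: "koszul_sign r S t * koszul_sign r S t = 1"
  by (simp add: koszul_sign_def flip: power_mult_distrib)

lemma koszul_sign_insert_swap:
  assumes "strict_linear_order_on A r" "s \<in> A" "v \<in> A" "s \<noteq> v"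
    and "finite U" "s \<notin> U" "v \<notin> U"
  shows "koszul_sign r (insert s (insert v U)) s * koszul_sign r (insert s (insert v U)) v
    = - (koszul_sign r (insert v U) v * koszul_sign r (insert s U) s :: 'k::field)"
proof -
  have "irrefl r"
    using assms(1) by (simp add: strict_linear_order_on_def)
  then have "koszul_sign r (insert s (insert v U)) s * koszul_sign r (insert s (insert v U)) v
      = (if (v, s) \<in> r then -1 else 1) * (if (s, v) \<in> r then -1 else 1)
        * (koszul_sign r U v * koszul_sign r U s :: 'k)"
    using assms(4-7) by (simp add: koszul_sign_insert_self koszul_sign_insert insert_commute[of s v])
  moreover have "((s, v) \<in> r) \<noteq> ((v, s) \<in> r)"
    using assms(1-4) by (rule strict_linear_order_on_xor)
  ultimately show ?thesis
    using \<open>irrefl r\<close> assms(5-7) by (cases "(s, v) \<in> r") (simp_all add: koszul_sign_insert_self)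
qed

definition koszul_boundary ::
  "'j set \<Rightarrow> ('j \<times> 'j) set \<Rightarrow> 'j set \<Rightarrow> ('j set \<Rightarrow> 'k::field) \<Rightarrow> 'k" where
  "koszul_boundary A r T x = (\<Sum>s\<in>A - T. koszul_sign r (insert s T) s * x (insert s T))"

lemma koszul_diff_eq:
  "koszul_diff A r d b x = (\<lambda>T. if T \<in> koszul_idx A d b then koszul_boundary A r T x else 0)"
  unfolding koszul_diff_def koszul_boundary_def ..

lemma koszul_boundary_boundary:
  fixes x :: "'j set \<Rightarrow> 'k::field"
  assumes "finite A" "strict_linear_order_on A r" "U \<subseteq> A"
  shows "koszul_boundary A r U (\<lambda>T. koszul_boundary A r T x) = 0"
proof -
  have irr: "irrefl r"
    using assms(2) by (simp add: strict_linear_order_on_def)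
  have "finite U"
    using assms(1,3) by (rule finite_subset[rotated])
  define B where "B = A - U"
  have "koszul_boundary A r U (\<lambda>T. koszul_boundary A r T x) =
      (\<Sum>s\<in>B. \<Sum>t\<in>B - {s}. koszul_sign r (insert s U) s * koszul_sign r (insert t (insert s U)) t
                              * x (insert t (insert s U)))"
    by (simp add: koszul_boundary_def B_def sum_distrib_left mult.assoc flip: Diff_insert)
  also have "\<dots> = 0"
  proof (rule sum_offdiag_antisym_eq_0)
    show "finite B"
      using assms(1) by (simp add: B_def)
    show "strict_linear_order_on B r"
      using assms(2) by (auto simp: B_def strict_linear_order_on_def total_on_def)
    have sign_pair: "koszul_sign r (insert s U) s * koszul_sign r (insert t (insert s U)) t
        = (if (s, t) \<in> r then -1 else 1) * (koszul_sign r U s * koszul_sign r U t :: 'k)"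
      if "s \<in> B" "t \<in> B" "s \<noteq> t" for s t
    proof -
      have "s \<notin> U" "t \<notin> insert s U"
        using that by (auto simp: B_def)
      then show ?thesis
        using \<open>finite U\<close> irr
        by (simp add: koszul_sign_insert_self koszul_sign_insert[of U s r t])
    qed
    fix s t assume st: "s \<in> B" "t \<in> B" "s \<noteq> t"
    have "((s, t) \<in> r) \<noteq> ((t, s) \<in> r)"
      using st by (intro strict_linear_order_on_xor[OF assms(2)]) (auto simp: B_def)
    moreover have "insert s (insert t U) = insert t (insert s U)"
      by blast
    ultimately show "koszul_sign r (insert s U) s * koszul_sign r (insert t (insert s U)) t
          * x (insert t (insert s U))
        = - (koszul_sign r (insert t U) t * koszul_sign r (insert s (insert t U)) s
          * x (insert s (insert t U)))"
      unfolding sign_pair[OF st] sign_pair[of t s, OF st(2,1) st(3)[symmetric]]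
      by (cases "(s, t) \<in> r") (simp_all add: mult.commute)
  qed
  finally show ?thesis .
qed

definition koszul_cone ::
  "('j \<times> 'j) set \<Rightarrow> 'j \<Rightarrow> ('j set \<Rightarrow> 'k::field) \<Rightarrow> 'j set \<Rightarrow> 'k" where
  "koszul_cone r v x = (\<lambda>S. if v \<in> S then koszul_sign r S v * x (S - {v}) else 0)"

lemma koszul_boundary_cone_notin:
  fixes x :: "'j set \<Rightarrow> 'k::field"
  assumes "finite A" "v \<in> A" "v \<notin> T"
  shows "koszul_boundary A r T (koszul_cone r v x) = x T"
proof -
  have "koszul_boundary A r T (koszul_cone r v x) = (\<Sum>s\<in>A - T. if s = v then x T else 0)"
    unfolding koszul_boundary_def
  proof (rule sum.cong)
    fix s assume "s \<in> A - T"
    then show "koszul_sign r (insert s T) s * koszul_cone r v x (insert s T)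
        = (if s = v then x T else 0)"
      using assms(3) koszul_sign_mult_self[of r "insert v T" v]
      by (auto simp: koszul_cone_def mult.assoc[symmetric])
  qed simp
  also have "\<dots> = x T"
    using assms by simp
  finally show ?thesis .
qed

lemma koszul_boundary_cone_in:
  fixes x :: "'j set \<Rightarrow> 'k::field"
  assumes "finite A" "strict_linear_order_on A r" "T \<subseteq> A" "v \<in> T"
  shows "koszul_boundary A r T (koszul_cone r v x)
    = x T - koszul_sign r T v * koszul_boundary A r (T - {v}) x"
proof -
  define T' where "T' = T - {v}"
  have T: "T = insert v T'" "v \<notin> T'" "finite T'"
    using assms(1,3,4) finite_subset by (auto simp: T'_def)
  define c where "c = (koszul_sign r T v :: 'k)"
  define rest where "rest = (\<Sum>s\<in>A - T. koszul_sign r (insert s T') s * x (insert s T'))"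
  have cc: "c * c = 1"
    unfolding c_def by (rule koszul_sign_mult_self)
  have boundary_T': "koszul_boundary A r T' x = c * x T + rest"
  proof -
    have "A - T' = insert v (A - T)" "v \<notin> A - T"
      using assms(3,4) T by auto
    then show ?thesis
      unfolding koszul_boundary_def c_def rest_def using assms(1)
      by (simp add: T(1)[symmetric])
  qed
  have "koszul_boundary A r T (koszul_cone r v x)
      = (\<Sum>s\<in>A - T. - c * (koszul_sign r (insert s T') s * x (insert s T')))"
    unfolding koszul_boundary_def
  proof (rule sum.cong)
    fix s assume s: "s \<in> A - T"
    then have "insert s T - {v} = insert s T'"
      using T by auto
    moreover have "koszul_sign r (insert s T) s * koszul_sign r (insert s T) v
        = - (c * koszul_sign r (insert s T') s)"
      unfolding c_def T(1) using s T assms(3,4)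
      by (intro koszul_sign_insert_swap[OF assms(2)]) auto
    ultimately show "koszul_sign r (insert s T) s * koszul_cone r v x (insert s T)
        = - c * (koszul_sign r (insert s T') s * x (insert s T'))"
      using assms(4) by (simp add: koszul_cone_def mult.assoc[symmetric])
  qed simp
  also have "\<dots> = - (c * rest)"
    by (simp add: rest_def sum_negf sum_distrib_left)
  also have "\<dots> = x T - c * (c * x T + rest)"
    by (simp add: distrib_left mult.assoc[symmetric] cc)
  finally show ?thesis
    unfolding c_def[symmetric] T'_def[symmetric] boundary_T' .
qed

lemma mem_koszul_idx_iff:
  "S \<in> koszul_idx A d b \<longleftrightarrow> S \<subseteq> A \<and> card S = Suc d \<and> (\<forall>s\<in>S. s \<le> b)"
proof -
  have "finite S \<and> S \<noteq> {}" if "card S = Suc d"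
    using that card_gt_0_iff[of S] by auto
  then show ?thesis
    by (auto simp: koszul_idx_def Sup_fin.bounded_iff)
qed

lemma koszul_space_eq_zero:
  assumes "\<forall>v\<in>A. \<not> v \<le> b" "x \<in> koszul_space A d b"
  shows "x = (\<lambda>_. 0)"
proof
  fix S
  show "x S = 0"
  proof (rule ccontr)
    assume "x S \<noteq> 0"
    then have "S \<subseteq> A" "card S = Suc d" "\<forall>s\<in>S. s \<le> b"
      using assms(2) by (auto simp: koszul_space_def mem_koszul_idx_iff)
    then show False
      using assms(1) by (cases "S = {}") auto
  qed
qed

lemma koszul_diff_in_koszul_space: "koszul_diff A r d b y \<in> koszul_space A d b"
  by (simp add: koszul_space_def koszul_diff_def)

lemma koszul_cone_in_koszul_space:
  assumes "x \<in> koszul_space A d b" "v \<in> A" "v \<le> b"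
  shows "koszul_cone r v x \<in> koszul_space A (Suc d) b"
  unfolding koszul_space_def
proof (intro CollectI allI impI)
  fix S assume "koszul_cone r v x S \<noteq> 0"
  then have "v \<in> S" "x (S - {v}) \<noteq> 0"
    by (auto simp: koszul_cone_def split: if_splits)
  moreover from this have "S - {v} \<subseteq> A" "card (S - {v}) = Suc d" "\<forall>s\<in>S - {v}. s \<le> b"
    using assms(1) by (auto simp: koszul_space_def mem_koszul_idx_iff)
  ultimately show "S \<in> koszul_idx A (Suc d) b"
    using assms(2,3) by (auto simp: mem_koszul_idx_iff card_Suc_Diff1 card_ge_0_finite)
qed

lemma koszul_diff_eq_koszul_boundary:
  assumes "y \<in> koszul_space A (Suc d) b" "S \<subseteq> A" "card S = Suc d"
  shows "koszul_diff A r d b y S = koszul_boundary A r S y"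
proof (cases "S \<in> koszul_idx A d b")
  case False
  then obtain s where "s \<in> S" "\<not> s \<le> b"
    using assms(2,3) by (auto simp: mem_koszul_idx_iff)
  then have "y (insert t S) = 0" for t
    using assms(1) by (auto simp: koszul_space_def mem_koszul_idx_iff)
  then show ?thesis
    using False by (simp add: koszul_diff_eq koszul_boundary_def)
qed (simp add: koszul_diff_eq)

lemma koszul_boundary_koszul_diff:
  fixes y :: "'j::semilattice_sup set \<Rightarrow> 'k::field"
  assumes "finite A" "strict_linear_order_on A r"
    and "y \<in> koszul_space A (Suc d) b" "U \<subseteq> A" "card U = d"
  shows "koszul_boundary A r U (koszul_diff A r d b y) = 0"
proof -
  have "koszul_diff A r d b y (insert s U) = koszul_boundary A r (insert s U) y"
    if "s \<in> A - U" for s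
    using that assms(3-5) finite_subset[OF assms(4,1)]
    by (intro koszul_diff_eq_koszul_boundary) auto
  then have "koszul_boundary A r U (koszul_diff A r d b y)
      = koszul_boundary A r U (\<lambda>T. koszul_boundary A r T y)"
    unfolding koszul_boundary_def[of A r U] by (intro sum.cong) simp_all
  also have "\<dots> = 0"
    using assms(1,2,4) by (rule koszul_boundary_boundary)
  finally show ?thesis .
qed

text \<open>In degree 0 the only U is {}, and the condition says that the augmentation vanishes
(see koszul_aug_eq_koszul_boundary_empty below).\<close>

definition koszul_cycles ::
  "'j::semilattice_sup set \<Rightarrow> ('j \<times> 'j) set \<Rightarrow> nat \<Rightarrow> 'j \<Rightarrow> ('j set \<Rightarrow> 'k::field) set" where
  "koszul_cycles A r d b =
     {x \<in> koszul_space A d b. \<forall>U \<subseteq> A. card U = d \<longrightarrow> koszul_boundary A r U x = 0}"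

lemma koszul_diff_koszul_cone:
  assumes "finite A" "strict_linear_order_on A r"
    and "x \<in> koszul_cycles A r d b" "v \<in> A" "v \<le> b"
  shows "koszul_diff A r d b (koszul_cone r v x) = x"
proof
  fix T
  show "koszul_diff A r d b (koszul_cone r v x) T = x T"
  proof (cases "T \<in> koszul_idx A d b")
    case True
    then have T: "T \<subseteq> A" "card T = Suc d"
      by (auto simp: mem_koszul_idx_iff)
    show ?thesis
    proof (cases "v \<in> T")
      case True
      have "card (T - {v}) = d"
        using T(2) True by (subst card_Diff_singleton) (auto intro: card_ge_0_finite)
      then have "koszul_boundary A r (T - {v}) x = 0"
        using assms(3) T(1) unfolding koszul_cycles_def by blast
      then show ?thesis
        using \<open>T \<in> koszul_idx A d b\<close> koszul_boundary_cone_in[OF assms(1,2) T(1) True, of x]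
        by (simp add: koszul_diff_eq)
    next
      case False
      then show ?thesis
        using \<open>T \<in> koszul_idx A d b\<close> koszul_boundary_cone_notin[OF assms(1,4) False, of r x]
        by (simp add: koszul_diff_eq)
    qed
  next
    case False
    then show ?thesis
      using assms(3) by (auto simp: koszul_diff_eq koszul_cycles_def koszul_space_def)
  qed
qed

lemma koszul_cycles_eq_image_koszul_diff:
  assumes "finite A" "strict_linear_order_on A r"
  shows "koszul_cycles A r d b = koszul_diff A r d b ` koszul_space A (Suc d) b"
proof (intro equalityI subsetI)
  fix x assume x: "x \<in> koszul_cycles A r d b"
  show "x \<in> koszul_diff A r d b ` koszul_space A (Suc d) b"
  proof (cases "\<exists>v\<in>A. v \<le> b")
    case True
    then obtain v where "v \<in> A" "v \<le> b" by blast
    then show ?thesis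
      using koszul_diff_koszul_cone[OF assms x] x koszul_cone_in_koszul_space[of x A d b v r]
      by (auto simp: koszul_cycles_def intro!: image_eqI[where x = "koszul_cone r v x"])
  next
    case False
    then have "x = (\<lambda>_. 0)"
      using x by (auto simp: koszul_cycles_def intro: koszul_space_eq_zero)
    then show ?thesis
      by (auto simp: koszul_space_def koszul_diff_def intro!: image_eqI[where x = "\<lambda>_. 0"])
  qed
next
  fix x assume "x \<in> koszul_diff A r d b ` koszul_space A (Suc d) b"
  then show "x \<in> koszul_cycles A r d b"
    using koszul_boundary_koszul_diff[OF assms] koszul_diff_in_koszul_space
    by (auto simp: koszul_cycles_def)
qed

lemma koszul_aug_eq_koszul_boundary_empty:
  fixes x :: "'j set \<Rightarrow> 'k::field"
  assumes "irrefl r"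
  shows "koszul_aug A x = koszul_boundary A r {} x"
proof -
  have "(koszul_sign r {s} s :: 'k) = 1" for s
    using koszul_sign_insert_self[of "{}" s r] assms by (simp add: koszul_sign_def)
  then show ?thesis
    by (simp add: koszul_aug_def koszul_boundary_def)
qed

lemma koszul_aug_kernel_eq_koszul_cycles:
  assumes "finite A" "irrefl r"
  shows "{x \<in> koszul_space A 0 b. koszul_aug A x = 0} = koszul_cycles A r 0 b"
proof -
  have "U = {}" if "U \<subseteq> A" "card U = 0" for U
    using that finite_subset[OF _ assms(1)] by auto
  then show ?thesis
    by (auto simp: koszul_cycles_def koszul_aug_eq_koszul_boundary_empty[OF assms(2)])
qed

lemma koszul_diff_kernel_eq_koszul_cycles:
  "{x \<in> (koszul_space A (Suc d) b :: ('j::semilattice_sup set \<Rightarrow> 'k::field) set).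
      koszul_diff A r d b x = (\<lambda>_. 0)}
    = koszul_cycles A r (Suc d) b"
proof -
  have "koszul_diff A r d b x = (\<lambda>_. 0)
      \<longleftrightarrow> (\<forall>U \<subseteq> A. card U = Suc d \<longrightarrow> koszul_boundary A r U x = 0)"
    if x: "x \<in> koszul_space A (Suc d) b" for x :: "'j set \<Rightarrow> 'k"
  proof
    assume "koszul_diff A r d b x = (\<lambda>_. 0)"
    then show "\<forall>U \<subseteq> A. card U = Suc d \<longrightarrow> koszul_boundary A r U x = 0"
      using koszul_diff_eq_koszul_boundary[OF x] by metis
  next
    assume "\<forall>U \<subseteq> A. card U = Suc d \<longrightarrow> koszul_boundary A r U x = 0"
    then show "koszul_diff A r d b x = (\<lambda>_. 0)"
      by (auto simp: koszul_diff_eq mem_koszul_idx_iff)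
  qed
  then show ?thesis
    by (auto simp: koszul_cycles_def)
qed

lemma koszul_aug_image:
  assumes "finite A"
  shows "koszul_aug A ` (koszul_space A 0 b :: ('j::semilattice_sup set \<Rightarrow> 'k::field) set)
    = (if \<exists>v\<in>A. v \<le> b then UNIV else {0})"
proof (cases "\<exists>v\<in>A. v \<le> b")
  case True
  then obtain v where v: "v \<in> A" "v \<le> b" by blast
  have "c \<in> koszul_aug A ` (koszul_space A 0 b :: ('j set \<Rightarrow> 'k) set)" for c
  proof
    show "(\<lambda>S. if S = {v} then c else 0) \<in> koszul_space A 0 b"
      using v by (auto simp: koszul_space_def mem_koszul_idx_iff)
    show "c = koszul_aug A (\<lambda>S. if S = {v} then c else 0)"
      using v assms by (simp add: koszul_aug_def)
  qed
  then show ?thesis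
    using True by auto
next
  case False
  then have "koszul_space A 0 b = {\<lambda>_. 0 :: 'k}"
    using koszul_space_eq_zero[of A b] by (auto simp: koszul_space_def)
  then show ?thesis
    using False by (simp add: koszul_aug_def)
qed

lemma subfunctor_const_eq_0_or_UNIV:
  assumes "is_subfunctor_const F"
  shows "F a = {0} \<or> F a = UNIV"
proof -
  have zero: "0 \<in> F a" and smult: "\<And>c x. x \<in> F a \<Longrightarrow> c * x \<in> F a"
    using assms by (auto simp: is_subfunctor_const_def)
  have "F a = UNIV" if "x \<in> F a" "x \<noteq> 0" for x
  proof -
    have "y \<in> F a" for y
      using smult[OF that(1), of "y / x"] that(2) by simp
    then show ?thesis
      by blast
  qed
  then show ?thesis
    using zero by blast
qed

lemma subfunctor_const_eq:
  fixes F :: "'j::{finite, order} \<Rightarrow> 'k::field set"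
  assumes "is_subfunctor_const F"
  shows "F b = (if \<exists>v\<in>betti0_supp F. v \<le> b then UNIV else {0})"
proof (cases "\<exists>v\<in>betti0_supp F. v \<le> b")
  case True
  then obtain v where "v \<in> betti0_supp F" "v \<le> b" by blast
  then have "F v = UNIV"
    using subfunctor_const_eq_0_or_UNIV[OF assms, of v] by (auto simp: betti0_supp_def supp_fun_def)
  moreover have "F v \<subseteq> F b"
    using assms \<open>v \<le> b\<close> by (simp add: is_subfunctor_const_def)
  ultimately show ?thesis
    using True by auto
next
  case False
  have "b \<notin> supp_fun F"
  proof
    assume "b \<in> supp_fun F"
    then obtain m where "m \<in> supp_fun F" "m \<le> b" "\<forall>a \<in> supp_fun F. a \<le> m \<longrightarrow> m = a"
      using finite_has_minimal2[of "supp_fun F" b] by auto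
    then show False
      using False by (auto simp: betti0_supp_def)
  qed
  then show ?thesis
    using False by (simp add: supp_fun_def)
qed

theorem proposition4p8:
  fixes F :: "'j::{finite, semilattice_sup} \<Rightarrow> 'k::field set"
    and r :: "('j \<times> 'j) set"
  assumes "is_subfunctor_const F"
    and "strict_linear_order_on (betti0_supp F) r"
  shows "\<forall>b.
     koszul_aug (betti0_supp F) ` (koszul_space (betti0_supp F) 0 b :: ('j set \<Rightarrow> 'k) set) = F b
   \<and> {x \<in> (koszul_space (betti0_supp F) 0 b :: ('j set \<Rightarrow> 'k) set). koszul_aug (betti0_supp F) x = 0}
       = koszul_diff (betti0_supp F) r 0 b ` koszul_space (betti0_supp F) 1 b
   \<and> (\<forall>d. {x \<in> (koszul_space (betti0_supp F) (Suc d) b :: ('j set \<Rightarrow> 'k) set). koszul_diff (betti0_supp F) r d b x = (\<lambda>_. 0)}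
       = koszul_diff (betti0_supp F) r (Suc d) b ` koszul_space (betti0_supp F) (Suc (Suc d)) b)"
proof -
  have fin: "finite (betti0_supp F)"
    by simp
  have irr: "irrefl r"
    using assms(2) by (simp add: strict_linear_order_on_def)
  have aug_image: "koszul_aug (betti0_supp F) ` koszul_space (betti0_supp F) 0 b = F b" for b
    by (rule trans[OF koszul_aug_image[OF fin] subfunctor_const_eq[OF assms(1), symmetric]])
  show ?thesis
    unfolding aug_image One_nat_def
      koszul_aug_kernel_eq_koszul_cycles[OF fin irr] koszul_diff_kernel_eq_koszul_cycles
      koszul_cycles_eq_image_koszul_diff[OF fin assms(2)]
    by simp
qed

end
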